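(* Let $p$ be a prime, $n\ge2$, let $F,G:\mathbb{F}_p^n\to\mathbb{F}_p^n$ and let $\mathcal{E}=\{e_1,\dots,e_n\}$ be a basis of $\mathbb{F}_p^n$ over $\mathbb{F}_p$ with coordinates $x_1,\dots,x_n$ relative to $\mathcal{E}$. Then \[\Delta_{e_1}F(x_1,\dots,x_n)=\Delta_{e_2}G(x_1,\dots,x_n)\quad\text{for all }(x_1,\dots,x_n)\in\mathbb{F}_p^n\] if and only if for every nonzero $\mu\in\mathbb{F}_p^n$, writing the algebraic normal forms \[\mu\cdot F=\sum_{(i_1,\dots,i_n)}f^{(\mu)}_{(i_1,\dots,i_n)}\prod_{j=1}^nx_j^{i_j},\qquad \mu\cdot G=\sum_{(i_1,\dots,i_n)}g^{(\mu)}_{(i_1,\dots,i_n)}\prod_{j=1}^nx_j^{i_j},\] the coefficients satisfy \[\sum_{k=i_1+1}^{p-1}\binom{k}{k-i_1}f^{(\mu)}_{(k,i_2,i_3,\dots,i_n)}=\sum_{k=i_2+1}^{p-1}\binom{k}{k-i_2}g^{(\mu)}_{(i_1,k,i_3,\dots,i_n)}\] for all $i_1,i_2\in\{0,\dots,p-2\}$ and $(i_3,\dots,i_n)\in\{0,\dots,p-1\}^{n-2}$, and \[\sum_{k=j+1}^{p-1}\binom{k}{k-j}f^{(\mu)}_{(k,p-1,i_3,\dots,i_n)}=\sum_{k=j+1}^{p-1}\binom{k}{k-j}g^{(\mu)}_{(p-1,k,i_3,\dots,i_n)}=0\] for all $j\in\{0,\dots,p-2\}$ and $(i_3,\dots,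i_n)\in\{0,\dots,p-1\}^{n-2}$.
   Context: $\Delta_aF(x)=F(x+a)-F(x)$ for $a\in\mathbb{F}_p^n$. Writing $x=\sum_jx_je_j$, every function $h:\mathbb{F}_p^n\to\mathbb{F}_p$ has a unique algebraic normal form $h=\sum_{(i_1,\dots,i_n)\in\{0,\dots,p-1\}^n}h_{(i_1,\dots,i_n)}\prod_jx_j^{i_j}$ with coefficients in $\mathbb{F}_p$. For $\mu\in\mathbb{F}_p^n$, $\mu\cdot F$ denotes the component function $x\mapsto\sum_{k=1}^n\mu_kF_k(x)$ where $F=(F_1,\dots,F_n)$ (similarly for $G$). Binomial coefficients are taken modulo $p$ and all equalities are in $\mathbb{F}_p$. *)

theory Defs
  imports "HOL-Computational_Algebra.Primes"
begin

text \<open>Vectors of F_p^n are modelled as functions nat => 'a that vanish from index n on;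
  index j corresponds to the paper's index j+1.\<close>

definition vecs :: "nat \<Rightarrow> (nat \<Rightarrow> 'a::zero) set" where
  "vecs n = {v. \<forall>j\<ge>n. v j = 0}"

definition vadd :: "(nat \<Rightarrow> 'a::plus) \<Rightarrow> (nat \<Rightarrow> 'a) \<Rightarrow> nat \<Rightarrow> 'a" where
  "vadd x y = (\<lambda>k. x k + y k)"

definition vsub :: "(nat \<Rightarrow> 'a::minus) \<Rightarrow> (nat \<Rightarrow> 'a) \<Rightarrow> nat \<Rightarrow> 'a" where
  "vsub x y = (\<lambda>k. x k - y k)"

definition lincomb :: "nat \<Rightarrow> (nat \<Rightarrow> 'a::comm_ring_1) \<Rightarrow> (nat \<Rightarrow> nat \<Rightarrow> 'a) \<Rightarrow> nat \<Rightarrow> 'a" where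
  "lincomb n c e = (\<lambda>k. \<Sum>j<n. c j * e j k)"

definition is_basis :: "nat \<Rightarrow> (nat \<Rightarrow> nat \<Rightarrow> 'a::field) \<Rightarrow> bool" where
  "is_basis n e \<longleftrightarrow> (\<forall>j<n. e j \<in> vecs n)
     \<and> (\<forall>c\<in>vecs n. lincomb n c e = (\<lambda>_. 0) \<longrightarrow> c = (\<lambda>_. 0))
     \<and> (\<forall>v\<in>vecs n. \<exists>c\<in>vecs n. v = lincomb n c e)"

definition expts :: "nat \<Rightarrow> nat \<Rightarrow> (nat \<Rightarrow> nat) set" where
  "expts n p = {i. (\<forall>j<n. i j < p) \<and> (\<forall>j\<ge>n. i j = 0)}"

definition anf_coeff :: "nat \<Rightarrow> ((nat \<Rightarrow> 'a) \<Rightarrow> 'a) \<Rightarrow> (nat \<Rightarrow> nat) \<Rightarrow> 'a::{finite,field}" where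
  "anf_coeff n h = (THE c. (\<forall>i. i \<notin> expts n (card (UNIV :: 'a set)) \<longrightarrow> c i = 0) \<and>
      (\<forall>x\<in>vecs n. h x = (\<Sum>i\<in>expts n (card (UNIV :: 'a set)). c i * (\<Prod>j<n. x j ^ i j))))"

definition comp_fun :: "nat \<Rightarrow> (nat \<Rightarrow> 'a::comm_ring_1) \<Rightarrow> ((nat \<Rightarrow> 'a) \<Rightarrow> (nat \<Rightarrow> 'a)) \<Rightarrow> (nat \<Rightarrow> 'a) \<Rightarrow> 'a" where
  "comp_fun n \<mu> F = (\<lambda>x. \<Sum>k<n. \<mu> k * F x k)"

end

(*
  Every function h : F_q^n -> F_q has a unique algebraic normal form, i.e. a polynomial of
  degree < q in each variable.  Uniqueness holds because a nonzero univariate polynomial of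
  degree < q cannot vanish on all of F_q; existence follows because evaluation is then an
  injection between two sets of q^(q^n) functions.

  By the binomial theorem, the finite difference along the l-th coordinate turns the
  coefficient family f into i |-> sum_{k > i_l} binom(k, i_l) f(i(l := k)).  So
  Delta_{e_1} F = Delta_{e_2} G holds for the component mu . F, mu . G iff these shifted
  coefficients agree, and a vector identity holds iff it holds after applying every nonzero
  functional mu.  An exponent i with i_1 = q - 1 (resp. i_2 = q - 1) makes the shifted
  coefficient of F (resp. G) an empty sum; separating these exponents gives the second
  family of conditions.
*)
theory Submission
  imports Defs "HOL-Computational_Algebra.Polynomial" "HOL-Library.FuncSet" "HOL-Library.Cardinality"
begin

section \<open>Algebraic normal forms\<close>

definition anf_monomial :: "nat \<Rightarrow> (nat \<Rightarrow> nat) \<Rightarrow> (nat \<Rightarrow> 'a) \<Rightarrow> 'a::comm_ring_1" where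
  "anf_monomial n i x = (\<Prod>j<n. x j ^ i j)"

definition anf_eval :: "nat \<Rightarrow> ((nat \<Rightarrow> nat) \<Rightarrow> 'a) \<Rightarrow> (nat \<Rightarrow> 'a) \<Rightarrow> 'a::{finite,comm_ring_1}" where
  "anf_eval n c x = (\<Sum>i\<in>expts n CARD('a). c i * anf_monomial n i x)"

lemma card_funs_with_default:
  assumes "finite A"
  shows "card {f. (\<forall>x\<in>A. f x \<in> B) \<and> (\<forall>x. x \<notin> A \<longrightarrow> f x = z)} = card B ^ card A"
proof -
  have "bij_betw (\<lambda>f. restrict f A) {f. (\<forall>x\<in>A. f x \<in> B) \<and> (\<forall>x. x \<notin> A \<longrightarrow> f x = z)} (A \<rightarrow>\<^sub>E B)"
    by (rule bij_betw_byWitness[where f'="\<lambda>g x. if x \<in> A then g x else z"])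
       (auto simp: PiE_def extensional_def fun_eq_iff)
  then show ?thesis
    using assms by (simp add: bij_betw_same_card card_funcsetE)
qed

lemma card_vecs: "card (vecs n :: (nat \<Rightarrow> 'a::{finite,zero}) set) = CARD('a) ^ n"
proof -
  have "vecs n = {f :: nat \<Rightarrow> 'a. (\<forall>x\<in>{..<n}. f x \<in> UNIV) \<and> (\<forall>x. x \<notin> {..<n} \<longrightarrow> f x = 0)}"
    by (auto simp: vecs_def)
  then show ?thesis
    using card_funs_with_default[of "{..<n}" UNIV 0] by simp
qed

lemma card_expts: "card (expts n q) = q ^ n"
proof -
  have "expts n q = {f. (\<forall>x\<in>{..<n}. f x \<in> {..<q}) \<and> (\<forall>x. x \<notin> {..<n} \<longrightarrow> f x = 0)}"
    by (auto simp: expts_def)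
  then show ?thesis
    using card_funs_with_default[of "{..<n}" "{..<q}" 0] by simp
qed

lemma finite_vecs: "finite (vecs n :: (nat \<Rightarrow> 'a::{finite,zero}) set)"
  using card_vecs[where 'a='a] by (intro card_ge_0_finite) (simp add: finite_UNIV_card_ge_0)

lemma finite_expts: "0 < q \<Longrightarrow> finite (expts n q)"
  using card_expts[of n q] by (intro card_ge_0_finite) simp

lemma expts_less: "i \<in> expts n q \<Longrightarrow> l < n \<Longrightarrow> i l < q"
  by (simp add: expts_def)

lemma fun_upd_in_expts: "i \<in> expts n q \<Longrightarrow> l < n \<Longrightarrow> m < q \<Longrightarrow> i(l := m) \<in> expts n q"
  by (simp add: expts_def)

lemma bij_betw_expts_Suc: "bij_betw (\<lambda>(i, m). i(n := m)) (expts n q \<times> {..<q}) (expts (Suc n) q)"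
  by (rule bij_betw_byWitness[where f'="\<lambda>i. (i(n := 0), i n)"])
     (auto simp: expts_def fun_eq_iff less_Suc_eq)

lemma poly_fun_vanishing_coeff_eq_0:
  fixes d :: "nat \<Rightarrow> 'a::{finite,field}"
  assumes "\<And>t. (\<Sum>m<CARD('a). d m * t ^ m) = 0" and "m < CARD('a)"
  shows "d m = 0"
proof (rule ccontr)
  define P where "P = (\<Sum>m<CARD('a). monom (d m) m)"
  assume "d m \<noteq> 0"
  then have "P \<noteq> 0"
    using assms(2) by (auto simp: P_def coeff_sum poly_eq_iff)
  then have "card {t. poly P t = 0} \<le> degree P"
    by (rule card_poly_roots_bound)
  moreover have "{t. poly P t = 0} = UNIV"
    using assms(1) by (simp add: P_def poly_sum poly_monom)
  moreover have "degree P < CARD('a)"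
    unfolding P_def
    by (rule degree_sum_less) (auto intro: le_less_trans[OF degree_monom_le] simp: finite_UNIV_card_ge_0)
  ultimately show False by simp
qed

lemma anf_eval_Suc:
  fixes c :: "(nat \<Rightarrow> nat) \<Rightarrow> 'a::{finite,comm_ring_1}"
  shows "anf_eval (Suc n) c (x(n := t)) = (\<Sum>m<CARD('a). anf_eval n (\<lambda>i. c (i(n := m))) x * t ^ m)"
proof -
  let ?E = "expts n CARD('a)"
  have "(\<Prod>j<n. (x(n := t)) j ^ (i(n := m)) j) = (\<Prod>j<n. x j ^ i j)" for i m
    by (rule prod.cong) auto
  then have monomial: "anf_monomial (Suc n) (i(n := m)) (x(n := t)) = anf_monomial n i x * t ^ m" for i m
    by (simp add: anf_monomial_def)
  have "anf_eval (Suc n) c (x(n := t))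
      = (\<Sum>(i, m)\<in>?E \<times> {..<CARD('a)}. c (i(n := m)) * (anf_monomial n i x * t ^ m))"
    unfolding anf_eval_def sum.reindex_bij_betw[OF bij_betw_expts_Suc, symmetric]
    by (simp add: case_prod_beta monomial)
  also have "\<dots> = (\<Sum>m<CARD('a). \<Sum>i\<in>?E. c (i(n := m)) * (anf_monomial n i x * t ^ m))"
    by (simp add: sum.cartesian_product[symmetric] sum.swap[of _ ?E])
  finally show ?thesis
    by (simp add: anf_eval_def sum_distrib_right mult.assoc)
qed

lemma anf_eval_vanishing_coeff_eq_0:
  fixes c :: "(nat \<Rightarrow> nat) \<Rightarrow> 'a::{finite,field}"
  assumes "\<forall>x\<in>vecs n. anf_eval n c x = 0"
  shows "\<forall>i\<in>expts n CARD('a). c i = 0"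
  using assms
proof (induction n arbitrary: c)
  case 0
  have "(\<lambda>_. 0) \<in> vecs 0"
    by (simp add: vecs_def)
  with 0 have "anf_eval 0 c (\<lambda>_. 0) = 0"
    by blast
  moreover have "expts 0 CARD('a) = {\<lambda>_. 0}"
    by (auto simp: expts_def finite_UNIV_card_ge_0)
  ultimately show ?case
    by (simp add: anf_eval_def anf_monomial_def)
next
  case (Suc n)
  have slice_eq_0: "c (i(n := m)) = 0" if "i \<in> expts n CARD('a)" "m < CARD('a)" for i m
  proof (rule Suc.IH[of "\<lambda>i. c (i(n := m))", THEN bspec, OF ballI that(1)])
    fix x :: "nat \<Rightarrow> 'a"
    assume x: "x \<in> vecs n"
    have "x(n := t) \<in> vecs (Suc n)" for t
      using x by (auto simp: vecs_def)
    then have "(\<Sum>m<CARD('a). anf_eval n (\<lambda>i. c (i(n := m))) x * t ^ m) = 0" for t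
      using Suc.prems anf_eval_Suc[of n c x t] by simp
    then show "anf_eval n (\<lambda>i. c (i(n := m))) x = 0"
      by (rule poly_fun_vanishing_coeff_eq_0[of "\<lambda>m. anf_eval n (\<lambda>i. c (i(n := m))) x", OF _ that(2)])
  qed
  show ?case
  proof
    fix i assume "i \<in> expts (Suc n) CARD('a)"
    then have "i(n := 0) \<in> expts n CARD('a)" "i n < CARD('a)"
      by (auto simp: expts_def less_Suc_eq)
    from slice_eq_0[OF this] show "c i = 0" by simp
  qed
qed

lemma anf_eval_eq_iff:
  fixes c d :: "(nat \<Rightarrow> nat) \<Rightarrow> 'a::{finite,field}"
  shows "(\<forall>x\<in>vecs n. anf_eval n c x = anf_eval n d x) \<longleftrightarrow> (\<forall>i\<in>expts n CARD('a). c i = d i)"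
proof
  assume "\<forall>x\<in>vecs n. anf_eval n c x = anf_eval n d x"
  then have "\<forall>x\<in>vecs n. anf_eval n (\<lambda>i. c i - d i) x = 0"
    by (simp add: anf_eval_def left_diff_distrib sum_subtractf)
  then show "\<forall>i\<in>expts n CARD('a). c i = d i"
    by (auto dest: anf_eval_vanishing_coeff_eq_0)
qed (simp add: anf_eval_def)

lemma anf_exists:
  fixes h :: "(nat \<Rightarrow> 'a::{finite,field}) \<Rightarrow> 'a"
  obtains c where "\<forall>i. i \<notin> expts n CARD('a) \<longrightarrow> c i = 0" and "\<forall>x\<in>vecs n. h x = anf_eval n c x"
proof -
  let ?E = "expts n CARD('a)" and ?V = "vecs n :: (nat \<Rightarrow> 'a) set"
  define eval where "eval c = restrict (anf_eval n c) ?V" for c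
  have "finite ?E"
    by (simp add: finite_expts finite_UNIV_card_ge_0)
  have "inj_on eval (?E \<rightarrow>\<^sub>E UNIV)"
  proof (rule inj_onI)
    fix c d assume "c \<in> ?E \<rightarrow>\<^sub>E UNIV" "d \<in> ?E \<rightarrow>\<^sub>E UNIV" "eval c = eval d"
    then show "c = d"
      using anf_eval_eq_iff[of n c d]
      by (auto simp: eval_def restrict_def PiE_def fun_eq_iff extensional_def split: if_splits)
  qed
  moreover have "eval ` (?E \<rightarrow>\<^sub>E UNIV) \<subseteq> ?V \<rightarrow>\<^sub>E UNIV"
    by (auto simp: eval_def)
  moreover have "card (?E \<rightarrow>\<^sub>E (UNIV :: 'a set)) = card (?V \<rightarrow>\<^sub>E (UNIV :: 'a set))"
    using \<open>finite ?E\<close> by (simp add: card_funcsetE[OF finite_vecs] card_funcsetE card_expts card_vecs)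
  ultimately have "eval ` (?E \<rightarrow>\<^sub>E UNIV) = ?V \<rightarrow>\<^sub>E UNIV"
    by (intro card_subset_eq) (simp_all add: finite_PiE[OF finite_vecs] card_image)
  then have "restrict h ?V \<in> eval ` (?E \<rightarrow>\<^sub>E UNIV)"
    by simp
  then obtain c where "c \<in> ?E \<rightarrow>\<^sub>E UNIV" "restrict h ?V = eval c"
    by (rule imageE)
  then show thesis
    by (intro that[of "\<lambda>i. if i \<in> ?E then c i else 0"])
       (auto simp: eval_def anf_eval_def restrict_def fun_eq_iff split: if_splits)
qed

lemma anf_coeff_eqI:
  fixes h :: "(nat \<Rightarrow> 'a::{finite,field}) \<Rightarrow> 'a"
  assumes "\<forall>i. i \<notin> expts n CARD('a) \<longrightarrow> c i = 0" and "\<forall>x\<in>vecs n. h x = anf_eval n c x"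
  shows "anf_coeff n h = c"
  unfolding anf_coeff_def
proof (rule the_equality)
  show "(\<forall>i. i \<notin> expts n CARD('a) \<longrightarrow> c i = 0) \<and>
      (\<forall>x\<in>vecs n. h x = (\<Sum>i\<in>expts n CARD('a). c i * (\<Prod>j<n. x j ^ i j)))"
    using assms by (simp add: anf_eval_def anf_monomial_def)
next
  fix d
  assume "(\<forall>i. i \<notin> expts n CARD('a) \<longrightarrow> d i = 0) \<and>
      (\<forall>x\<in>vecs n. h x = (\<Sum>i\<in>expts n CARD('a). d i * (\<Prod>j<n. x j ^ i j)))"
  with assms anf_eval_eq_iff[of n d c] show "d = c"
    by (auto simp: anf_eval_def anf_monomial_def fun_eq_iff)
qed

lemma anf_eval_anf_coeff:
  fixes h :: "(nat \<Rightarrow> 'a::{finite,field}) \<Rightarrow> 'a"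
  assumes "x \<in> vecs n"
  shows "h x = anf_eval n (anf_coeff n h) x"
proof -
  obtain c where "\<forall>i. i \<notin> expts n CARD('a) \<longrightarrow> c i = 0" and "\<forall>x\<in>vecs n. h x = anf_eval n c x"
    by (rule anf_exists)
  with assms show ?thesis
    by (simp add: anf_coeff_eqI)
qed

section \<open>Finite differences\<close>

definition unit_vec :: "nat \<Rightarrow> nat \<Rightarrow> 'a::zero_neq_one" where
  "unit_vec l = (\<lambda>k. if k = l then 1 else 0)"

definition delta_coeff :: "nat \<Rightarrow> nat \<Rightarrow> ((nat \<Rightarrow> nat) \<Rightarrow> 'a) \<Rightarrow> (nat \<Rightarrow> nat) \<Rightarrow> 'a::comm_ring_1" where
  "delta_coeff q l f i = (\<Sum>k\<in>{i l + 1..q - 1}. of_nat (k choose (k - i l)) * f (i(l := k)))"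

lemma anf_monomial_shift:
  fixes x :: "nat \<Rightarrow> 'a::comm_ring_1"
  assumes "l < n"
  shows "anf_monomial n i (vadd x (unit_vec l)) - anf_monomial n i x
    = (\<Sum>m<i l. of_nat (i l choose m) * anf_monomial n (i(l := m)) x)"
proof -
  define R where "R = (\<Prod>j\<in>{..<n} - {l}. x j ^ i j)"
  have split: "anf_monomial n i' y = y l ^ i' l * (\<Prod>j\<in>{..<n} - {l}. y j ^ i' j)"
    for i' and y :: "nat \<Rightarrow> 'a"
    unfolding anf_monomial_def using assms by (subst prod.remove[of _ l]) auto
  have "(\<Prod>j\<in>{..<n} - {l}. vadd x (unit_vec l) j ^ i j) = R"
    "(\<Prod>j\<in>{..<n} - {l}. x j ^ (i(l := m)) j) = R" for m
    unfolding R_def by (auto simp: vadd_def unit_vec_def intro: prod.cong)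
  then have "anf_monomial n i (vadd x (unit_vec l)) - anf_monomial n i x
      = ((x l + 1) ^ i l - x l ^ i l) * R"
       "anf_monomial n (i(l := m)) x = x l ^ m * R" for m
    by (simp_all add: split vadd_def unit_vec_def R_def left_diff_distrib)
  moreover have "(x l + 1) ^ i l - x l ^ i l = (\<Sum>m<i l. of_nat (i l choose m) * x l ^ m)"
    by (simp add: binomial_ring[of "x l" 1] lessThan_Suc_atMost[symmetric])
  ultimately show ?thesis
    by (simp add: sum_distrib_right mult.assoc)
qed

lemma anf_eval_shift:
  fixes f :: "(nat \<Rightarrow> nat) \<Rightarrow> 'a::{finite,comm_ring_1}"
  assumes "l < n"
  shows "anf_eval n f (vadd x (unit_vec l)) - anf_eval n f x = anf_eval n (delta_coeff CARD('a) l f) x"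
proof -
  let ?q = "CARD('a)"
  let ?E = "expts n ?q"
  have "finite ?E"
    by (simp add: finite_expts finite_UNIV_card_ge_0)
  have "anf_eval n f (vadd x (unit_vec l)) - anf_eval n f x
      = (\<Sum>i\<in>?E. f i * (anf_monomial n i (vadd x (unit_vec l)) - anf_monomial n i x))"
    by (simp add: anf_eval_def sum_subtractf right_diff_distrib)
  also have "\<dots> = (\<Sum>i\<in>?E. \<Sum>m<i l. f i * of_nat (i l choose m) * anf_monomial n (i(l := m)) x)"
    by (simp add: anf_monomial_shift[OF assms] sum_distrib_left mult.assoc)
  also have "\<dots> = (\<Sum>(i, m)\<in>Sigma ?E (\<lambda>i. {..<i l}). f i * of_nat (i l choose m) * anf_monomial n (i(l := m)) x)"
    using \<open>finite ?E\<close> by (simp add: sum.Sigma)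
  also have "\<dots> = (\<Sum>(i, k)\<in>Sigma ?E (\<lambda>i. {i l + 1..?q - 1}).
                     of_nat (k choose (k - i l)) * f (i(l := k)) * anf_monomial n i x)"
    \<comment> \<open>the term of x^i with x_l-exponent lowered to m is collected at i(l := m), with k = i l\<close>
    using assms
    by (intro sum.reindex_bij_witness[where j="\<lambda>(i, m). (i(l := m), i l)" and i="\<lambda>(i, k). (i(l := k), i l)"])
       (auto simp: binomial_symmetric[symmetric] fun_upd_in_expts intro: fun_upd_in_expts less_trans[OF _ expts_less] dest: expts_less)
  also have "\<dots> = anf_eval n (delta_coeff ?q l f) x"
    using \<open>finite ?E\<close> by (simp add: sum.Sigma[symmetric] anf_eval_def delta_coeff_def sum_distrib_right)
  finally show ?thesis .
qed

lemma vadd_unit_vec_in_vecs: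
  fixes c :: "nat \<Rightarrow> 'a::{monoid_add,zero_neq_one}"
  shows "c \<in> vecs n \<Longrightarrow> l < n \<Longrightarrow> vadd c (unit_vec l) \<in> vecs n"
  by (simp add: vecs_def vadd_def unit_vec_def)

lemma delta_eq_iff_delta_coeff_eq:
  fixes hF hG :: "(nat \<Rightarrow> 'a) \<Rightarrow> 'a::{finite,field}"
  assumes "l < n" and "l' < n"
  shows "(\<forall>c\<in>vecs n. hF (vadd c (unit_vec l)) - hF c = hG (vadd c (unit_vec l')) - hG c)
    \<longleftrightarrow> (\<forall>i\<in>expts n CARD('a).
          delta_coeff CARD('a) l (anf_coeff n hF) i = delta_coeff CARD('a) l' (anf_coeff n hG) i)"
proof -
  have delta: "h (vadd c (unit_vec k)) - h c = anf_eval n (delta_coeff CARD('a) k (anf_coeff n h)) c"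
    if "c \<in> vecs n" "k < n" for h :: "(nat \<Rightarrow> 'a) \<Rightarrow> 'a" and c k
    using anf_eval_anf_coeff[OF that(1), of h] anf_eval_anf_coeff[OF vadd_unit_vec_in_vecs[OF that], of h]
      anf_eval_shift[OF that(2)] by simp
  show ?thesis
    using assms by (simp add: delta[of _ _ hF] delta[of _ _ hG] anf_eval_eq_iff)
qed

lemma delta_coeff_top: "delta_coeff q l f (i(l := q - 1)) = 0"
  by (simp add: delta_coeff_def)

lemma delta_coeff_fun_upd:
  "delta_coeff q l f (i(l := j)) = (\<Sum>k\<in>{j + 1..q - 1}. of_nat (k choose (k - j)) * f (i(l := k)))"
  by (simp add: delta_coeff_def)

lemma ball_expts_eq_iff_split_top:
  fixes A B :: "(nat \<Rightarrow> nat) \<Rightarrow> 'a::zero"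
  assumes "2 \<le> q" and "2 \<le> n"
    and "\<And>i. A (i(0 := q - 1)) = 0" and "\<And>i. B (i(1 := q - 1)) = 0"
  shows "(\<forall>i\<in>expts n q. A i = B i) \<longleftrightarrow>
    (\<forall>i\<in>expts n q. i 0 \<le> q - 2 \<longrightarrow> i 1 \<le> q - 2 \<longrightarrow> A i = B i) \<and>
    (\<forall>j\<in>{0..q - 2}. \<forall>i\<in>expts n q. A (i(1 := q - 1, 0 := j)) = 0 \<and> B (i(0 := q - 1, 1 := j)) = 0)"
    (is "?eq \<longleftrightarrow> ?inner \<and> ?border")
proof -
  have A_top: "A i = 0" if "i 0 = q - 1" for i
    using assms(3)[of i] fun_upd_triv[of i 0] that by metis
  have B_top: "B i = 0" if "i 1 = q - 1" for i
    using assms(4)[of i] fun_upd_triv[of i 1] that by metis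
  show ?thesis
  proof
    assume eq: ?eq
    have "A (i(1 := q - 1, 0 := j)) = 0 \<and> B (i(0 := q - 1, 1 := j)) = 0"
      if "i \<in> expts n q" "j \<le> q - 2" for i j
    proof -
      have "i(1 := q - 1, 0 := j) \<in> expts n q" "i(0 := q - 1, 1 := j) \<in> expts n q"
        using that assms(1,2) by (simp_all add: fun_upd_in_expts)
      with eq have "A (i(1 := q - 1, 0 := j)) = B (i(1 := q - 1, 0 := j))"
        "A (i(0 := q - 1, 1 := j)) = B (i(0 := q - 1, 1 := j))"
        by blast+
      then show ?thesis
        using A_top[of "i(0 := q - 1, 1 := j)"] B_top[of "i(1 := q - 1, 0 := j)"] by simp
    qed
    with eq show "?inner \<and> ?border"
      by auto
  next
    assume "?inner \<and> ?border"
    then have inner: ?inner and border: ?border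
      by blast+
    show ?eq
    proof
      fix i
      assume i: "i \<in> expts n q"
      have "i 0 < q" "i 1 < q"
        using expts_less[OF i] assms(2) by simp_all
      then consider "i 0 \<le> q - 2" "i 1 \<le> q - 2" | "i 0 \<le> q - 2" "i 1 = q - 1"
        | "i 0 = q - 1" "i 1 \<le> q - 2" | "i 0 = q - 1" "i 1 = q - 1"
        by linarith
      then show "A i = B i"
      proof cases
        case 1
        with i inner show ?thesis by blast
      next
        case 2
        then have "i(1 := q - 1, 0 := i 0) = i"
          by (simp add: fun_eq_iff)
        with border[rule_format, of "i 0" i] i 2 B_top show ?thesis
          by simp
      next
        case 3
        then have "i(0 := q - 1, 1 := i 1) = i"
          by (simp add: fun_eq_iff)
        with border[rule_format, of "i 1" i] i 3 A_top show ?thesis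
          by simp
      next
        case 4
        with A_top B_top show ?thesis by simp
      qed
    qed
  qed
qed

lemma card_field_ge_2: "2 \<le> CARD('a::{finite,field})"
proof -
  have "card {0, 1 :: 'a} \<le> CARD('a)"
    by (rule card_mono) simp_all
  then show ?thesis
    by simp
qed

lemma delta_eq_iff_anf_conditions:
  fixes hF hG :: "(nat \<Rightarrow> 'a) \<Rightarrow> 'a::{finite,field}"
  assumes "2 \<le> n"
  shows "(\<forall>c\<in>vecs n. hF (vadd c (unit_vec 0)) - hF c = hG (vadd c (unit_vec 1)) - hG c)
    \<longleftrightarrow> (let p = CARD('a); f = anf_coeff n hF; g = anf_coeff n hG
       in (\<forall>i\<in>expts n p. i 0 \<le> p - 2 \<longrightarrow> i 1 \<le> p - 2 \<longrightarrow>
             (\<Sum>k\<in>{i 0 + 1..p - 1}. of_nat (k choose (k - i 0)) * f (i(0 := k)))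
           = (\<Sum>k\<in>{i 1 + 1..p - 1}. of_nat (k choose (k - i 1)) * g (i(1 := k))))
        \<and> (\<forall>j\<in>{0..p - 2}. \<forall>i\<in>expts n p.
             (\<Sum>k\<in>{j + 1..p - 1}. of_nat (k choose (k - j)) * f (i(0 := k, 1 := p - 1))) = 0
           \<and> (\<Sum>k\<in>{j + 1..p - 1}. of_nat (k choose (k - j)) * g (i(0 := p - 1, 1 := k))) = 0))"
proof -
  have n: "0 < n" "1 < n"
    using assms by simp_all
  show ?thesis
    unfolding delta_eq_iff_delta_coeff_eq[OF n]
      ball_expts_eq_iff_split_top[where A = "delta_coeff CARD('a) 0 (anf_coeff n hF)"
        and B = "delta_coeff CARD('a) 1 (anf_coeff n hG)",
        OF card_field_ge_2 assms delta_coeff_top delta_coeff_top]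
      delta_coeff_fun_upd
    \<comment> \<open>separate pass: rewriting is bottom-up, so the twist would block delta_coeff_fun_upd\<close>
    unfolding fun_upd_twist[of 1 0, OF one_neq_zero] delta_coeff_def Let_def ..
qed

section \<open>Component functions\<close>

lemma sum_unit_vec_mult:
  fixes w :: "nat \<Rightarrow> 'a::comm_ring_1"
  assumes "k < n"
  shows "(\<Sum>j<n. unit_vec k j * w j) = w k"
proof -
  have "(\<Sum>j<n. unit_vec k j * w j) = (\<Sum>j<n. if j = k then w j else 0)"
    by (rule sum.cong) (simp_all add: unit_vec_def)
  with assms show ?thesis
    by simp
qed

lemma vecs_eq_iff_functionals:
  fixes u v :: "nat \<Rightarrow> 'a::comm_ring_1"
  assumes "u \<in> vecs n" and "v \<in> vecs n"
  shows "u = v \<longleftrightarrow> (\<forall>\<mu>\<in>vecs n. \<mu> \<noteq> (\<lambda>_. 0) \<longrightarrow> (\<Sum>k<n. \<mu> k * u k) = (\<Sum>k<n. \<mu> k * v k))"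
proof (intro iffI ballI impI)
  assume H: "\<forall>\<mu>\<in>vecs n. \<mu> \<noteq> (\<lambda>_. 0) \<longrightarrow> (\<Sum>k<n. \<mu> k * u k) = (\<Sum>k<n. \<mu> k * v k)"
  show "u = v"
  proof
    fix k
    show "u k = v k"
    proof (cases "k < n")
      case True
      have "unit_vec k \<in> vecs n" "unit_vec k \<noteq> (\<lambda>_. 0 :: 'a)"
        using True by (auto simp: vecs_def unit_vec_def fun_eq_iff)
      with H have "(\<Sum>j<n. unit_vec k j * u j) = (\<Sum>j<n. unit_vec k j * v j)"
        by blast
      with True show ?thesis
        by (simp add: sum_unit_vec_mult)
    next
      case False
      with assms show ?thesis
        by (simp add: vecs_def)
    qed
  qed
qed simp

lemma comp_fun_vsub:
  "(\<Sum>k<n. \<mu> k * vsub (H x) (H y) k) = comp_fun n \<mu> H x - comp_fun n \<mu> H y"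
  by (simp add: comp_fun_def vsub_def right_diff_distrib sum_subtractf)

lemma vsub_eq_iff_comp_fun:
  fixes F G :: "(nat \<Rightarrow> 'a::comm_ring_1) \<Rightarrow> nat \<Rightarrow> 'a"
  assumes "\<forall>x\<in>vecs n. F x \<in> vecs n" and "\<forall>x\<in>vecs n. G x \<in> vecs n"
    and "x \<in> vecs n" "y \<in> vecs n" "x' \<in> vecs n" "y' \<in> vecs n"
  shows "vsub (F x) (F y) = vsub (G x') (G y') \<longleftrightarrow>
    (\<forall>\<mu>\<in>vecs n. \<mu> \<noteq> (\<lambda>_. 0) \<longrightarrow>
      comp_fun n \<mu> F x - comp_fun n \<mu> F y = comp_fun n \<mu> G x' - comp_fun n \<mu> G y')"
proof -
  have "vsub (F x) (F y) \<in> vecs n" "vsub (G x') (G y') \<in> vecs n"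
    using assms by (auto simp: vecs_def vsub_def)
  then show ?thesis
    unfolding comp_fun_vsub[symmetric] by (rule vecs_eq_iff_functionals)
qed

lemma lincomb_vadd_unit_vec:
  fixes e :: "nat \<Rightarrow> nat \<Rightarrow> 'a::comm_ring_1"
  assumes "l < n"
  shows "lincomb n (vadd c (unit_vec l)) e = vadd (lincomb n c e) (e l)"
  using assms by (simp add: lincomb_def vadd_def distrib_right sum.distrib sum_unit_vec_mult)

theorem theorem3:
  fixes F G :: "(nat \<Rightarrow> 'a::{finite,field}) \<Rightarrow> (nat \<Rightarrow> 'a)"
    and e :: "nat \<Rightarrow> nat \<Rightarrow> 'a" and n :: nat
  assumes "prime (card (UNIV :: 'a set))" and "n \<ge> 2"
    and "\<forall>x\<in>vecs n. F x \<in> vecs n" and "\<forall>x\<in>vecs n. G x \<in> vecs n"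
    and "is_basis n e"
  shows "(\<forall>c\<in>vecs n.
            vsub (F (vadd (lincomb n c e) (e 0))) (F (lincomb n c e))
          = vsub (G (vadd (lincomb n c e) (e 1))) (G (lincomb n c e)))
    \<longleftrightarrow>
    (\<forall>\<mu>\<in>vecs n. \<mu> \<noteq> (\<lambda>_. 0) \<longrightarrow>
      (let p = card (UNIV :: 'a set);
           f = anf_coeff n (\<lambda>c. comp_fun n \<mu> F (lincomb n c e));
           g = anf_coeff n (\<lambda>c. comp_fun n \<mu> G (lincomb n c e))
       in (\<forall>i\<in>expts n p. i 0 \<le> p - 2 \<longrightarrow> i 1 \<le> p - 2 \<longrightarrow>
             (\<Sum>k\<in>{i 0 + 1..p - 1}. of_nat (k choose (k - i 0)) * f (i(0 := k)))
           = (\<Sum>k\<in>{i 1 + 1..p - 1}. of_nat (k choose (k - i 1)) * g (i(1 := k))))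
        \<and> (\<forall>j\<in>{0..p - 2}. \<forall>i\<in>expts n p.
             (\<Sum>k\<in>{j + 1..p - 1}. of_nat (k choose (k - j)) * f (i(0 := k, 1 := p - 1))) = 0
           \<and> (\<Sum>k\<in>{j + 1..p - 1}. of_nat (k choose (k - j)) * g (i(0 := p - 1, 1 := k))) = 0)))"
proof -
  have n: "0 < n" "1 < n"
    using assms(2) by simp_all
  have lincomb_in_vecs: "lincomb n c e \<in> vecs n" for c
    using assms(5) by (auto simp: is_basis_def vecs_def lincomb_def)
  have components: "vsub (F (vadd (lincomb n c e) (e 0))) (F (lincomb n c e))
      = vsub (G (vadd (lincomb n c e) (e 1))) (G (lincomb n c e))
    \<longleftrightarrow> (\<forall>\<mu>\<in>vecs n. \<mu> \<noteq> (\<lambda>_. 0) \<longrightarrow>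
          comp_fun n \<mu> F (lincomb n (vadd c (unit_vec 0)) e) - comp_fun n \<mu> F (lincomb n c e)
        = comp_fun n \<mu> G (lincomb n (vadd c (unit_vec 1)) e) - comp_fun n \<mu> G (lincomb n c e))" for c
    unfolding lincomb_vadd_unit_vec[OF n(1), symmetric] lincomb_vadd_unit_vec[OF n(2), symmetric]
    by (intro vsub_eq_iff_comp_fun assms(3,4) lincomb_in_vecs)
  show ?thesis
    unfolding components delta_eq_iff_anf_conditions[OF assms(2), symmetric] by blast
qed

end
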